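(* Let $\omega\in\mathbb{R}$. Then there exists a sequence $\{\varphi_n\}_{n\in\mathbb{N}}\subseteq W(\mathbb{R}^+)$ with $\varphi_n(0)=0$ for all $n$ such that $\lim_{n\to\infty}\|\varphi_n\|^2_{L^2(\mathbb{R}^+)}=4d_{\mathbb{R}^+}(\omega)$ and $\lim_{n\to\infty}I_{\mathbb{R}^+}(\varphi_n,\omega)=0$.
   Context: $W(\mathbb{R}^+)=\{v\in H^1(\mathbb{R}^+;\mathbb{C}):|v|^2\log|v|^2\in L^1(\mathbb{R}^+)\}$. $S_{\mathbb{R}^+}(v,\omega)=\frac12\|\partial_xv\|^2_{L^2(\mathbb{R}^+)}+\frac{\omega+1}2\|v\|^2_{L^2(\mathbb{R}^+)}-\frac12\int_0^\infty|v|^2\log|v|^2dx$, $I_{\mathbb{R}^+}(v,\omega)=\|\partial_xv\|^2_{L^2(\mathbb{R}^+)}+\omega\|v\|^2_{L^2(\mathbb{R}^+)}-\int_0^\infty|v|^2\log|v|^2dx$, and $d_{\mathbb{R}^+}(\omega)=\inf\{S_{\mathbb{R}^+}(v,\omega):v\in W(\mathbb{R}^+)\setminus\{0\},I_{\mathbb{R}^+}(v,\omega)=0\}$. *)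

theory Defs
  imports "HOL-Analysis.Analysis"
begin

text \<open>H^1 on the half line R^+ = (0,oo), complex valued, via the absolutely continuous
representative: v is square integrable on (0,oo), and g is an L^2 function with
v x = v 0 + int_0^x g for all x >= 0 (so g is the weak derivative of v and v 0 is the trace).\<close>

definition H1_deriv_halfline :: "(real \<Rightarrow> complex) \<Rightarrow> (real \<Rightarrow> complex) \<Rightarrow> bool" where
  "H1_deriv_halfline v g \<longleftrightarrow>
     set_integrable lborel {0<..} (\<lambda>x. (cmod (v x))\<^sup>2) \<and>
     set_borel_measurable lborel {0<..} g \<and>
     set_integrable lborel {0<..} (\<lambda>x. (cmod (g x))\<^sup>2) \<and>
     (\<forall>x\<ge>0. set_integrable lborel {0..x} g \<and> v x = v 0 + (LINT t:{0..x}|lborel. g t))"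

definition in_W_halfline :: "(real \<Rightarrow> complex) \<Rightarrow> (real \<Rightarrow> complex) \<Rightarrow> bool" where
  "in_W_halfline v g \<longleftrightarrow> H1_deriv_halfline v g \<and>
     set_integrable lborel {0<..} (\<lambda>x. (cmod (v x))\<^sup>2 * ln ((cmod (v x))\<^sup>2))"

definition L2sq_halfline :: "(real \<Rightarrow> complex) \<Rightarrow> real" where
  "L2sq_halfline v = (LINT x:{0<..}|lborel. (cmod (v x))\<^sup>2)"

definition logterm_halfline :: "(real \<Rightarrow> complex) \<Rightarrow> real" where
  "logterm_halfline v = (LINT x:{0<..}|lborel. (cmod (v x))\<^sup>2 * ln ((cmod (v x))\<^sup>2))"

definition S_halfline :: "(real \<Rightarrow> complex) \<Rightarrow> (real \<Rightarrow> complex) \<Rightarrow> real \<Rightarrow> real" where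
  "S_halfline v g \<omega> = L2sq_halfline g / 2 + (\<omega> + 1) / 2 * L2sq_halfline v - logterm_halfline v / 2"

definition I_halfline :: "(real \<Rightarrow> complex) \<Rightarrow> (real \<Rightarrow> complex) \<Rightarrow> real \<Rightarrow> real" where
  "I_halfline v g \<omega> = L2sq_halfline g + \<omega> * L2sq_halfline v - logterm_halfline v"

definition d_halfline :: "real \<Rightarrow> real" where
  "d_halfline \<omega> = Inf {S_halfline v g \<omega> | v g. in_W_halfline v g \<and> (\<exists>x\<ge>0. v x \<noteq> 0)
                                               \<and> I_halfline v g \<omega> = 0}"

end

theory Submission
  imports Defs "HOL-Real_Asymp.Real_Asymp"
begin

text \<open>On the Nehari set \<open>I = 0\<close> one has \<open>S = \<parallel>v\<parallel>\<^sup>2 / 2\<close>, so \<open>2 d\<close> is the infimum of the masses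
of Nehari functions; the set is nonempty because replacing \<open>v\<close> by \<open>c v\<close> changes \<open>I\<close> into
\<open>|c|\<^sup>2 (I - ln |c|\<^sup>2 \<parallel>v\<parallel>\<^sup>2)\<close>. Given a Nehari function \<open>v\<close> of almost minimal mass, choose \<open>a\<close> far
out with \<open>|v a|\<^sup>2\<close> small and glue a linear ramp from \<open>0\<close> to \<open>v a\<close> on \<open>[0,1]\<close>, then \<open>v\<close> run
backwards from \<open>a\<close> to \<open>0\<close>, then \<open>v\<close> again. The glued function vanishes at \<open>0\<close>, and its mass and
its value of \<open>I\<close> are those of \<open>v\<close> counted twice, up to the tail of \<open>v\<close> beyond \<open>a\<close> and the
contribution of the ramp, both of which are small.\<close>

lemma set_integral_const_bounded:
  fixes c :: "'b::{banach,second_countable_topology}" and u w :: real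
  assumes "A \<subseteq> {u..w}" "A \<in> sets lborel"
  shows "set_integrable lborel A (\<lambda>_. c)" "(LINT x:A|lborel. c) = measure lborel A *\<^sub>R c"
proof -
  have "emeasure lborel A \<le> emeasure lborel {u..w}" by (rule emeasure_mono[OF assms(1)]) auto
  then have fin: "emeasure lborel A < \<infinity>" by (simp add: emeasure_lborel_Icc_eq order.strict_trans1)
  then show "set_integrable lborel A (\<lambda>_. c)"
    using assms(2) by (auto simp: set_integrable_def intro!: integrable_scaleR_left)
  show "(LINT x:A|lborel. c) = measure lborel A *\<^sub>R c"
    using fin by (intro set_integral_const assms(2)) simp
qed

lemma set_integral_nonneg:
  fixes f :: "'a \<Rightarrow> real"
  assumes "\<And>x. x \<in> A \<Longrightarrow> 0 \<le> f x"
  shows "0 \<le> (LINT x:A|M. f x)"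
  unfolding set_lebesgue_integral_def
  by (rule integral_nonneg_AE) (use assms in \<open>auto simp: indicator_def\<close>)

lemma set_integral_mono_set_nonneg:
  fixes f :: "'a \<Rightarrow> real"
  assumes "set_integrable M T f" "S \<subseteq> T" "S \<in> sets M" "\<And>x. x \<in> T \<Longrightarrow> 0 \<le> f x"
  shows "(LINT x:S|M. f x) \<le> (LINT x:T|M. f x)"
proof -
  have "set_integrable M S f" by (rule set_integrable_subset[OF assms(1,3,2)])
  with assms show ?thesis
    unfolding set_lebesgue_integral_def set_integrable_def
    by (intro integral_mono) (auto simp: indicator_def)
qed

lemma set_integral_lborel_cong_countable:
  fixes f :: "real \<Rightarrow> 'b::{banach,second_countable_topology}"
  assumes "A - C = B - C" "countable C"
  shows "set_integrable lborel A f \<longleftrightarrow> set_integrable lborel B f"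
    and "(LINT x:A|lborel. f x) = (LINT x:B|lborel. f x)"
proof -
  have "(A - B) \<union> (B - A) \<subseteq> C" using assms(1) by blast
  then show "set_integrable lborel A f \<longleftrightarrow> set_integrable lborel B f"
    and "(LINT x:A|lborel. f x) = (LINT x:B|lborel. f x)"
    by (intro set_integrable_discrete_difference[OF assms(2)] set_integral_discrete_difference[OF assms(2)]; simp)+
qed

lemma set_integral_lborel_unit_affine:
  fixes f :: "real \<Rightarrow> 'b::{banach,second_countable_topology}"
  assumes "set_integrable lborel S f" "\<bar>c\<bar> = 1"
  shows "set_integrable lborel {y. t + c * y \<in> S} (\<lambda>y. f (t + c * y))"
    and "(LINT y:{y. t + c * y \<in> S}|lborel. f (t + c * y)) = (LINT y:S|lborel. f y)"
proof -
  define F where "F = (\<lambda>s. indicator S s *\<^sub>R f s)"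
  have "has_bochner_integral lborel F (LINT y:S|lborel. f y)"
    using assms(1) unfolding F_def set_integrable_def set_lebesgue_integral_def
    by (simp add: has_bochner_integral_integrable)
  then have "has_bochner_integral lborel (\<lambda>y. F (t + c * y)) (LINT y:S|lborel. f y)"
    using lborel_has_bochner_integral_real_affine_iff[of c F _ t] assms(2) by auto
  moreover have "(\<lambda>y. F (t + c * y)) = (\<lambda>y. indicator {y. t + c * y \<in> S} y *\<^sub>R f (t + c * y))"
    by (auto simp: F_def indicator_def)
  ultimately show "set_integrable lborel {y. t + c * y \<in> S} (\<lambda>y. f (t + c * y))"
    and "(LINT y:{y. t + c * y \<in> S}|lborel. f (t + c * y)) = (LINT y:S|lborel. f y)"
    unfolding set_integrable_def set_lebesgue_integral_def by (simp_all add: has_bochner_integral_iff)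
qed

lemma set_integral_Icc_split:
  fixes f :: "real \<Rightarrow> 'b::{banach,second_countable_topology}"
  assumes "p \<le> q" "q \<le> r"
  shows "set_integrable lborel {p..r} f \<longleftrightarrow> set_integrable lborel {p..q} f \<and> set_integrable lborel {q..r} f"
    and "set_integrable lborel {p..r} f \<Longrightarrow>
      (LINT x:{p..r}|lborel. f x) = (LINT x:{p..q}|lborel. f x) + (LINT x:{q..r}|lborel. f x)"
proof -
  have U: "{p..r} = {p..<q} \<union> {q..r}" using assms by auto
  have pt: "{p..<q} - {q} = {p..q} - {q}" by auto
  note half_open = set_integral_lborel_cong_countable[OF pt, of f]
  show "set_integrable lborel {p..r} f \<longleftrightarrow> set_integrable lborel {p..q} f \<and> set_integrable lborel {q..r} f"
  proof
    assume "set_integrable lborel {p..r} f"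
    then show "set_integrable lborel {p..q} f \<and> set_integrable lborel {q..r} f"
      using assms by (auto intro: set_integrable_subset)
  next
    assume "set_integrable lborel {p..q} f \<and> set_integrable lborel {q..r} f"
    then show "set_integrable lborel {p..r} f"
      unfolding U using half_open(1) by (auto intro: set_integrable_Un)
  qed
  assume "set_integrable lborel {p..r} f"
  then have "set_integrable lborel {p..<q} f" "set_integrable lborel {q..r} f"
    using assms by (auto intro: set_integrable_subset)
  then have "(LINT x:{p..r}|lborel. f x) = (LINT x:{p..<q}|lborel. f x) + (LINT x:{q..r}|lborel. f x)"
    unfolding U by (intro set_integral_Un) auto
  then show "(LINT x:{p..r}|lborel. f x) = (LINT x:{p..q}|lborel. f x) + (LINT x:{q..r}|lborel. f x)"
    using half_open(2) by simp
qed

lemma set_integral_Ioo01_bounded: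
  fixes f :: "real \<Rightarrow> real"
  assumes "f \<in> borel_measurable borel" "\<And>y. 0 < y \<Longrightarrow> y < 1 \<Longrightarrow> \<bar>f y\<bar> \<le> B"
  shows "set_integrable lborel {0<..<1} f" "\<bar>LINT y:{0<..<1}|lborel. f y\<bar> \<le> B"
proof -
  show int: "set_integrable lborel {0<..<1} f"
    unfolding set_integrable_def
    by (rule integrableI_bounded_set_indicator[where B=B]) (use assms in auto)
  have B: "set_integrable lborel {0<..<1::real} (\<lambda>_. B)"
    by (rule set_integral_const_bounded(1)[where u=0 and w=1]) auto
  have "\<bar>LINT y:{0<..<1}|lborel. f y\<bar> \<le> (LINT y:{0<..<1}|lborel. \<bar>f y\<bar>)"
    using set_integral_norm_bound[OF int] by simp
  also have "\<dots> \<le> (LINT y:{0<..<1::real}|lborel. B)"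
    using int B assms(2) by (intro set_integral_mono) (auto simp: set_integrable_abs)
  also have "\<dots> = B" by (subst set_integral_const_bounded(2)[where u=0 and w=1]) auto
  finally show "\<bar>LINT y:{0<..<1}|lborel. f y\<bar> \<le> B" .
qed

lemma set_integrable_Ioi_of_bounded_support:
  fixes f :: "real \<Rightarrow> real"
  assumes "f \<in> borel_measurable borel" "\<And>x. 1 \<le> x \<Longrightarrow> f x = 0"
    and "\<And>x. 0 < x \<Longrightarrow> x < 1 \<Longrightarrow> \<bar>f x\<bar> \<le> B"
  shows "set_integrable lborel {0<..} f"
  unfolding set_integrable_def
  by (rule integrableI_bounded_set[where A="{0<..<1}" and B=B]) (use assms in \<open>auto simp: indicator_def\<close>)

lemma tendsto_set_integral_Ioc_at_top:
  fixes f :: "real \<Rightarrow> 'b::{banach,second_countable_topology}"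
  assumes "set_integrable lborel {0<..} f"
  shows "((\<lambda>b. LINT x:{0<..b}|lborel. f x) \<longlongrightarrow> (LINT x:{0<..}|lborel. f x)) at_top"
proof -
  have pt: "{0<..} - {0} = {0..} - {0::real}" "\<And>b. {0<..b} - {0} = {0..b} - {0::real}" by auto
  have "((\<lambda>b. LINT x:{0..b}|lborel. f x) \<longlongrightarrow> (LINT x:{0..}|lborel. f x)) at_top"
    using assms by (intro tendsto_set_lebesgue_integral_at_top) (auto simp: set_integral_lborel_cong_countable(1)[OF pt(1)])
  then show ?thesis by (simp add: set_integral_lborel_cong_countable(2)[OF pt(1)] set_integral_lborel_cong_countable(2)[OF pt(2)])
qed

definition primitive_on ::
    "(real \<Rightarrow> 'b::{banach,second_countable_topology}) \<Rightarrow> (real \<Rightarrow> 'b) \<Rightarrow> real \<Rightarrow> real \<Rightarrow> bool"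
  where "primitive_on F f p q \<longleftrightarrow> set_integrable lborel {p..q} f \<and> (LINT x:{p..q}|lborel. f x) = F q - F p"

lemma primitive_on_cong:
  assumes "primitive_on F f p q" "\<And>x. p < x \<Longrightarrow> x < q \<Longrightarrow> f x = f' x" "G q - G p = F q - F p"
  shows "primitive_on G f' p q"
proof -
  have pts: "{p..q} - {p, q} = {p<..<q} - {p, q}" by auto
  note open_interval = set_integral_lborel_cong_countable[OF pts]
  have "set_integrable lborel {p<..<q} f \<longleftrightarrow> set_integrable lborel {p<..<q} f'"
    using assms(2) by (intro set_integrable_cong) auto
  moreover have "(LINT x:{p<..<q}|lborel. f x) = (LINT x:{p<..<q}|lborel. f' x)"
    using assms(2) by (intro set_lebesgue_integral_cong) auto
  ultimately show ?thesis
    using assms(1,3) open_interval[of f] open_interval[of f'] unfolding primitive_on_def by simp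
qed

lemma primitive_on_trans:
  assumes "p \<le> q" "q \<le> r" "primitive_on F f p q" "primitive_on F f q r"
  shows "primitive_on F f p r"
  using assms set_integral_Icc_split[OF assms(1,2), of f] unfolding primitive_on_def by simp

lemma primitive_on_diff:
  assumes "p \<le> q" "q \<le> r" "primitive_on F f p r" "primitive_on F f p q"
  shows "primitive_on F f q r"
proof -
  have "set_integrable lborel {p..r} f" "(LINT x:{p..r}|lborel. f x) = F r - F p"
    and "(LINT x:{p..q}|lborel. f x) = F q - F p"
    using assms(3,4) unfolding primitive_on_def by auto
  with set_integral_Icc_split[OF assms(1,2), of f] show ?thesis
    unfolding primitive_on_def by (auto simp: algebra_simps eq_diff_eq)
qed

lemma primitive_on_linear:
  assumes "p \<le> q"
  shows "primitive_on (\<lambda>x. x *\<^sub>R c) (\<lambda>_. c) p q"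
  using assms set_integral_const_bounded[of "{p..q}" p q c]
  by (auto simp: primitive_on_def algebra_simps)

lemma primitive_on_reflect:
  assumes "primitive_on F f p q"
  shows "primitive_on (\<lambda>x. F (c - x)) (\<lambda>x. - f (c - x)) (c - q) (c - p)"
proof -
  have pre: "{y. c + (-1) * y \<in> {p..q}} = {c - q..c - p}" by auto
  have int: "set_integrable lborel {p..q} f" and eq: "(LINT x:{p..q}|lborel. f x) = F q - F p"
    using assms unfolding primitive_on_def by auto
  note affine = set_integral_lborel_unit_affine[OF int, of "-1" c, unfolded pre]
  have "set_integrable lborel {c - q..c - p} (\<lambda>x. - f (c - x))"
    using integrable_minus[OF affine(1)[unfolded set_integrable_def]] by (simp add: set_integrable_def)
  moreover have "(LINT x:{c - q..c - p}|lborel. - f (c - x)) = F (c - (c - p)) - F (c - (c - q))"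
    using affine eq by (simp add: set_integral_uminus)
  ultimately show ?thesis unfolding primitive_on_def by simp
qed

lemma primitive_on_translate:
  assumes "primitive_on F f p q"
  shows "primitive_on (\<lambda>x. F (x - c)) (\<lambda>x. f (x - c)) (p + c) (q + c)"
proof -
  have pre: "{y. - c + 1 * y \<in> {p..q}} = {p + c..q + c}" by auto
  have int: "set_integrable lborel {p..q} f" and eq: "(LINT x:{p..q}|lborel. f x) = F q - F p"
    using assms unfolding primitive_on_def by auto
  note affine = set_integral_lborel_unit_affine[OF int, of 1 "- c", unfolded pre]
  show ?thesis using affine eq unfolding primitive_on_def by simp
qed

lemma H1_deriv_halfline_primitive_on_iff:
  "H1_deriv_halfline v g \<longleftrightarrow>
     set_integrable lborel {0<..} (\<lambda>x. (cmod (v x))\<^sup>2) \<and> set_borel_measurable lborel {0<..} g \<and>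
     set_integrable lborel {0<..} (\<lambda>x. (cmod (g x))\<^sup>2) \<and> (\<forall>x\<ge>0. primitive_on v g 0 x)"
proof -
  have "(L = v x - v 0) \<longleftrightarrow> (v x = v 0 + L)" for L x by (auto simp: algebra_simps)
  then show ?thesis by (simp add: H1_deriv_halfline_def primitive_on_def)
qed

text \<open>\<open>g\<close> is only assumed measurable on \<open>(0,\<infinity>)\<close>; reflected and translated copies of it
need an extension that is measurable on the whole line.\<close>

definition zero_extension :: "(real \<Rightarrow> 'b::real_vector) \<Rightarrow> real \<Rightarrow> 'b" where
  "zero_extension g = (\<lambda>x. indicator {0<..} x *\<^sub>R g x)"

lemma H1_deriv_halfline_primitive_on:
  assumes "H1_deriv_halfline v g" "0 \<le> s" "s \<le> t"
  shows "primitive_on v (zero_extension g) s t"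
proof -
  have "primitive_on v g 0 x" if "0 \<le> x" for x
    using assms(1) that unfolding H1_deriv_halfline_primitive_on_iff by blast
  then have "primitive_on v g s t"
    using assms(2,3) by (intro primitive_on_diff[of 0 s t]) auto
  then show ?thesis by (rule primitive_on_cong) (use assms(2) in \<open>auto simp: zero_extension_def\<close>)
qed

definition mirror_glue :: "real \<Rightarrow> (real \<Rightarrow> 'b) \<Rightarrow> (real \<Rightarrow> 'b) \<Rightarrow> real \<Rightarrow> 'b" where
  "mirror_glue a r f x = (if x < 1 then r x else if x < a + 1 then f (a + 1 - x) else f (x - a - 1))"

lemma set_integral_mirror_glue:
  fixes f r :: "real \<Rightarrow> 'b::{banach,second_countable_topology}"
  assumes f: "set_integrable lborel {0<..} f" and r: "set_integrable lborel {0<..<1} r" and a: "0 \<le> a"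
  shows "set_integrable lborel {0<..} (mirror_glue a r f)"
    and "(LINT x:{0<..}|lborel. mirror_glue a r f x) =
         (LINT x:{0<..<1}|lborel. r x) + (LINT x:{0<..a}|lborel. f x) + (LINT x:{0<..}|lborel. f x)"
proof -
  let ?g = "mirror_glue a r f"
  have "set_integrable lborel {0<..a} f" by (rule set_integrable_subset[OF f]) auto
  note reflected = set_integral_lborel_unit_affine[OF this, of "-1" "a + 1"]
  note translated = set_integral_lborel_unit_affine[OF f, of 1 "- (a + 1)"]
  have pre: "{y. a + 1 + (-1) * y \<in> {0<..a}} = {1..<a + 1}" "{y. - (a + 1) + 1 * y \<in> {0<..}} = {a + 1<..}"
    by auto
  have i1: "set_integrable lborel {0<..<1} ?g"
    using r by (rule set_integrable_cong[THEN iffD1, rotated -1]) (auto simp: mirror_glue_def)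
  have e1: "(LINT x:{0<..<1}|lborel. ?g x) = (LINT x:{0<..<1}|lborel. r x)"
    by (rule set_lebesgue_integral_cong) (auto simp: mirror_glue_def)
  have i2: "set_integrable lborel {1..<a + 1} ?g"
    using reflected(1) unfolding pre
    by (rule set_integrable_cong[THEN iffD1, rotated -1]) (auto simp: mirror_glue_def)
  have e2: "(LINT x:{1..<a + 1}|lborel. ?g x) = (LINT x:{0<..a}|lborel. f x)"
    using reflected(2) unfolding pre
    by (subst set_lebesgue_integral_cong[where g="\<lambda>y. f (a + 1 + (-1) * y)"]) (auto simp: mirror_glue_def)
  have i3: "set_integrable lborel {a + 1<..} ?g"
    using translated(1) unfolding pre
    by (rule set_integrable_cong[THEN iffD1, rotated -1])
      (use a in \<open>auto simp: mirror_glue_def algebra_simps\<close>)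
  have e3: "(LINT x:{a + 1<..}|lborel. ?g x) = (LINT x:{0<..}|lborel. f x)"
    using translated(2) unfolding pre
    by (subst set_lebesgue_integral_cong[where g="\<lambda>y. f (- (a + 1) + 1 * y)"])
      (use a in \<open>auto simp: mirror_glue_def algebra_simps\<close>)
  have pt: "{0<..} - {a + 1} = ({0<..<1} \<union> ({1..<a + 1} \<union> {a + 1<..})) - {a + 1}" using a by auto
  note U = set_integral_lborel_cong_countable[OF pt, simplified]
  have i23: "set_integrable lborel ({1..<a + 1} \<union> {a + 1<..}) ?g" using i2 i3 by (rule set_integrable_Un) auto
  show "set_integrable lborel {0<..} ?g"
    unfolding U using i1 i23 by (rule set_integrable_Un) (use a in auto)
  have "(LINT x:{0<..}|lborel. ?g x) = (LINT x:{0<..<1}|lborel. ?g x) + (LINT x:{1..<a + 1} \<union> {a + 1<..}|lborel. ?g x)"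
    unfolding U using i1 i23 by (intro set_integral_Un) (use a in auto)
  also have "\<dots> = (LINT x:{0<..<1}|lborel. ?g x) + (LINT x:{1..<a + 1}|lborel. ?g x) + (LINT x:{a + 1<..}|lborel. ?g x)"
    using i2 i3 by (subst set_integral_Un) auto
  finally show "(LINT x:{0<..}|lborel. ?g x) =
      (LINT x:{0<..<1}|lborel. r x) + (LINT x:{0<..a}|lborel. f x) + (LINT x:{0<..}|lborel. f x)"
    by (simp add: e1 e2 e3)
qed

lemma primitive_on_mirror_glue:
  assumes prim: "\<And>s t. 0 \<le> s \<Longrightarrow> s \<le> t \<Longrightarrow> primitive_on v g s t" and a: "0 \<le> a" and x: "0 \<le> x"
  shows "primitive_on (mirror_glue a (\<lambda>y. y *\<^sub>R v a) v)
           (\<lambda>y. if y < 1 then v a else if y < a + 1 then - g (a + 1 - y) else g (y - a - 1)) 0 x"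
    (is "primitive_on ?F ?f 0 x")
proof -
  have ramp: "primitive_on ?F ?f 0 y" if "0 \<le> y" "y \<le> 1" for y
  proof (rule primitive_on_cong[OF primitive_on_linear[OF that(1), of "v a"]])
    have "?F 1 = v a" using a by (simp add: mirror_glue_def)
    then show "?F y - ?F 0 = y *\<^sub>R v a - 0 *\<^sub>R v a"
      using that by (cases "y = 1") (auto simp: mirror_glue_def)
  qed (use that in simp)
  have reflected: "primitive_on ?F ?f 1 y" if "1 \<le> y" "y \<le> a + 1" for y
  proof -
    have "primitive_on v g (a + 1 - y) a" using prim that by simp
    from primitive_on_reflect[OF this, of "a + 1"]
    have "primitive_on (\<lambda>z. v (a + 1 - z)) (\<lambda>z. - g (a + 1 - z)) 1 y" by simp
    then show ?thesis
      by (rule primitive_on_cong) (use that in \<open>auto simp: mirror_glue_def\<close>)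
  qed
  have translated: "primitive_on ?F ?f (a + 1) y" if "a + 1 \<le> y" for y
  proof -
    have "primitive_on v g 0 (y - a - 1)" using prim that by simp
    from primitive_on_translate[OF this, of "a + 1"]
    have "primitive_on (\<lambda>z. v (z - (a + 1))) (\<lambda>z. g (z - (a + 1))) (a + 1) y" by simp
    then show ?thesis
      by (rule primitive_on_cong) (use that a in \<open>auto simp: mirror_glue_def algebra_simps\<close>)
  qed
  consider "x \<le> 1" | "1 \<le> x" "x \<le> a + 1" | "a + 1 \<le> x" by linarith
  then show ?thesis
  proof cases
    case 1
    then show ?thesis by (rule ramp[OF x])
  next
    case 2
    then show ?thesis using primitive_on_trans[OF _ _ ramp[of 1] reflected[of x]] by simp
  next
    case 3
    have "primitive_on ?F ?f 0 (a + 1)" using a primitive_on_trans[OF _ _ ramp[of 1] reflected[of "a + 1"]] by simp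
    then show ?thesis using 3 a primitive_on_trans[OF _ _ _ translated[of x], of 0] by simp
  qed
qed

definition L2sq_upto :: "real \<Rightarrow> (real \<Rightarrow> complex) \<Rightarrow> real" where
  "L2sq_upto a v = (LINT x:{0<..a}|lborel. (cmod (v x))\<^sup>2)"

definition logterm_upto :: "real \<Rightarrow> (real \<Rightarrow> complex) \<Rightarrow> real" where
  "logterm_upto a v = (LINT x:{0<..a}|lborel. (cmod (v x))\<^sup>2 * ln ((cmod (v x))\<^sup>2))"

definition I_upto :: "real \<Rightarrow> (real \<Rightarrow> complex) \<Rightarrow> (real \<Rightarrow> complex) \<Rightarrow> real \<Rightarrow> real" where
  "I_upto a v g \<omega> = L2sq_upto a g + \<omega> * L2sq_upto a v - logterm_upto a v"

lemma in_W_halfline_integrable: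
  assumes "in_W_halfline v g"
  shows "set_integrable lborel {0<..} (\<lambda>x. (cmod (v x))\<^sup>2)"
    and "set_integrable lborel {0<..} (\<lambda>x. (cmod (g x))\<^sup>2)"
    and "set_integrable lborel {0<..} (\<lambda>x. (cmod (v x))\<^sup>2 * ln ((cmod (v x))\<^sup>2))"
  using assms unfolding in_W_halfline_def H1_deriv_halfline_def by auto

lemma tendsto_I_upto:
  assumes "in_W_halfline v g"
  shows "((\<lambda>a. L2sq_upto a v) \<longlongrightarrow> L2sq_halfline v) at_top"
    and "((\<lambda>a. I_upto a v g \<omega>) \<longlongrightarrow> I_halfline v g \<omega>) at_top"
  using in_W_halfline_integrable[OF assms, THEN tendsto_set_integral_Ioc_at_top]
  unfolding L2sq_upto_def I_upto_def logterm_upto_def L2sq_halfline_def I_halfline_def logterm_halfline_def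
  by (auto intro!: tendsto_intros)

lemma abs_mult_ln_le_1:
  fixes s :: real
  assumes "0 \<le> s" "s \<le> 1"
  shows "\<bar>s * ln s\<bar> \<le> 1"
proof (cases "s = 0")
  case False
  with assms have "0 < s" by simp
  have "- ln s \<le> 1 / s - 1" using ln_le_minus_one[of "1 / s"] \<open>0 < s\<close> by (simp add: ln_div)
  then have "- (s * ln s) \<le> 1 - s" using \<open>0 < s\<close> by (simp add: field_simps)
  moreover have "s * ln s \<le> 0" using assms \<open>0 < s\<close> by (simp add: mult_nonneg_nonpos)
  ultimately show ?thesis using assms by linarith
qed simp

lemma abs_scaled_mult_ln_le:
  fixes s t :: real
  assumes "0 \<le> s" "s \<le> 1" "0 \<le> t"
  shows "\<bar>(s * t) * ln (s * t)\<bar> \<le> t * (1 + \<bar>ln t\<bar>)"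
proof (cases "s = 0 \<or> t = 0")
  case False
  with assms have "0 < s" "0 < t" by auto
  then have "(s * t) * ln (s * t) = t * (s * ln s) + s * (t * ln t)"
    by (simp add: ln_mult algebra_simps)
  also have "\<bar>\<dots>\<bar> \<le> t * \<bar>s * ln s\<bar> + s * (t * \<bar>ln t\<bar>)"
    using abs_triangle_ineq[of "t * (s * ln s)" "s * (t * ln t)"] \<open>0 < s\<close> \<open>0 < t\<close>
    by (simp add: abs_mult)
  also have "\<dots> \<le> t * 1 + 1 * (t * \<bar>ln t\<bar>)"
    using abs_mult_ln_le_1[OF assms(1,2)] assms by (intro add_mono mult_mono) auto
  finally show ?thesis by (simp add: algebra_simps)
qed (use assms in auto)

lemma ramp_integrals:
  fixes t :: real
  assumes "0 \<le> t"
  shows "set_integrable lborel {0<..<1} (\<lambda>y. y\<^sup>2 * t)" "\<bar>LINT y:{0<..<1}|lborel. y\<^sup>2 * t\<bar> \<le> t"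
    and "set_integrable lborel {0<..<1} (\<lambda>y. (y\<^sup>2 * t) * ln (y\<^sup>2 * t))"
      "\<bar>LINT y:{0<..<1}|lborel. (y\<^sup>2 * t) * ln (y\<^sup>2 * t)\<bar> \<le> t * (1 + \<bar>ln t\<bar>)"
proof -
  have "y\<^sup>2 \<le> 1" if "0 < y" "y < (1::real)" for y using that by (simp add: power_le_one)
  then show "set_integrable lborel {0<..<1} (\<lambda>y. y\<^sup>2 * t)" "\<bar>LINT y:{0<..<1}|lborel. y\<^sup>2 * t\<bar> \<le> t"
    and "set_integrable lborel {0<..<1} (\<lambda>y. (y\<^sup>2 * t) * ln (y\<^sup>2 * t))"
      "\<bar>LINT y:{0<..<1}|lborel. (y\<^sup>2 * t) * ln (y\<^sup>2 * t)\<bar> \<le> t * (1 + \<bar>ln t\<bar>)"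
    using assms abs_scaled_mult_ln_le[of "_\<^sup>2" t]
    by (intro set_integral_Ioo01_bounded; force simp: abs_mult intro: mult_left_le_one_le)+
qed

lemma in_W_halfline_zero_extension:
  assumes "in_W_halfline v g"
  shows "zero_extension g \<in> borel_measurable borel"
    and "set_integrable lborel {0<..} (\<lambda>x. (cmod (zero_extension g x))\<^sup>2)"
    and "\<And>A. A \<in> sets lborel \<Longrightarrow> A \<subseteq> {0<..} \<Longrightarrow>
           (LINT x:A|lborel. (cmod (zero_extension g x))\<^sup>2) = (LINT x:A|lborel. (cmod (g x))\<^sup>2)"
proof -
  show "zero_extension g \<in> borel_measurable borel"
    using assms unfolding in_W_halfline_def H1_deriv_halfline_def set_borel_measurable_def zero_extension_def
    by simp
  show "set_integrable lborel {0<..} (\<lambda>x. (cmod (zero_extension g x))\<^sup>2)"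
    using in_W_halfline_integrable(2)[OF assms(1)]
    by (rule set_integrable_cong[THEN iffD1, rotated -1]) (auto simp: zero_extension_def)
  show "(LINT x:A|lborel. (cmod (zero_extension g x))\<^sup>2) = (LINT x:A|lborel. (cmod (g x))\<^sup>2)"
    if "A \<in> sets lborel" "A \<subseteq> {0<..}" for A
    using that by (intro set_lebesgue_integral_cong) (auto simp: zero_extension_def)
qed

lemma mirror_glue_in_W_halfline:
  assumes W: "in_W_halfline v g" and a: "0 \<le> a"
  defines "\<phi> \<equiv> mirror_glue a (\<lambda>y. y *\<^sub>R v a) v"
    and "\<psi> \<equiv> \<lambda>y. if y < 1 then v a
                 else if y < a + 1 then - zero_extension g (a + 1 - y) else zero_extension g (y - a - 1)"
    and "t \<equiv> (cmod (v a))\<^sup>2"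
  shows "in_W_halfline \<phi> \<psi>" "\<phi> 0 = 0"
    and "L2sq_halfline \<phi> = (LINT y:{0<..<1}|lborel. y\<^sup>2 * t) + L2sq_upto a v + L2sq_halfline v"
    and "L2sq_halfline \<psi> = t + L2sq_upto a g + L2sq_halfline g"
    and "logterm_halfline \<phi> =
      (LINT y:{0<..<1}|lborel. (y\<^sup>2 * t) * ln (y\<^sup>2 * t)) + logterm_upto a v + logterm_halfline v"
proof -
  note zero_ext = in_W_halfline_zero_extension[OF W]
  note [measurable] = zero_ext(1)
  note int = in_W_halfline_integrable[OF W]
  have t: "0 \<le> t" by (simp add: t_def)
  have const: "set_integrable lborel {0<..<1::real} (\<lambda>_. t)"
    by (rule set_integral_const_bounded(1)[where u=0 and w=1]) auto
  have const_integral: "(LINT y:{0<..<1::real}|lborel. t) = t"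
    by (subst set_integral_const_bounded(2)[where u=0 and w=1]) auto
  have norm_\<phi>: "(\<lambda>x. (cmod (\<phi> x))\<^sup>2) = mirror_glue a (\<lambda>y. y\<^sup>2 * t) (\<lambda>y. (cmod (v y))\<^sup>2)"
    by (simp add: fun_eq_iff \<phi>_def mirror_glue_def t_def power_mult_distrib)
  have norm_\<psi>: "(\<lambda>x. (cmod (\<psi> x))\<^sup>2) = mirror_glue a (\<lambda>_. t) (\<lambda>y. (cmod (zero_extension g y))\<^sup>2)"
    by (simp add: fun_eq_iff \<psi>_def mirror_glue_def t_def)
  have log_\<phi>: "(\<lambda>x. (cmod (\<phi> x))\<^sup>2 * ln ((cmod (\<phi> x))\<^sup>2)) =
      mirror_glue a (\<lambda>y. (y\<^sup>2 * t) * ln (y\<^sup>2 * t)) (\<lambda>y. (cmod (v y))\<^sup>2 * ln ((cmod (v y))\<^sup>2))"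
    by (simp add: fun_eq_iff \<phi>_def mirror_glue_def t_def power_mult_distrib)
  note glue_v = set_integral_mirror_glue[OF int(1) ramp_integrals(1)[OF t] a]
  note glue_g = set_integral_mirror_glue[OF zero_ext(2) const a]
  note glue_log = set_integral_mirror_glue[OF int(3) ramp_integrals(3)[OF t] a]
  show "L2sq_halfline \<phi> = (LINT y:{0<..<1}|lborel. y\<^sup>2 * t) + L2sq_upto a v + L2sq_halfline v"
    unfolding L2sq_halfline_def L2sq_upto_def norm_\<phi> glue_v(2) ..
  have "(LINT x:{0<..a}|lborel. (cmod (zero_extension g x))\<^sup>2) = (LINT x:{0<..a}|lborel. (cmod (g x))\<^sup>2)"
    and "(LINT x:{0<..}|lborel. (cmod (zero_extension g x))\<^sup>2) = (LINT x:{0<..}|lborel. (cmod (g x))\<^sup>2)"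
    by (intro zero_ext(3); auto)+
  then show "L2sq_halfline \<psi> = t + L2sq_upto a g + L2sq_halfline g"
    unfolding L2sq_halfline_def L2sq_upto_def norm_\<psi> glue_g(2) const_integral by simp
  show "logterm_halfline \<phi> =
      (LINT y:{0<..<1}|lborel. (y\<^sup>2 * t) * ln (y\<^sup>2 * t)) + logterm_upto a v + logterm_halfline v"
    unfolding logterm_halfline_def logterm_upto_def log_\<phi> glue_log(2) ..
  show "\<phi> 0 = 0" by (simp add: \<phi>_def mirror_glue_def)
  have "primitive_on \<phi> \<psi> 0 x" if "0 \<le> x" for x
    unfolding \<phi>_def \<psi>_def
    using primitive_on_mirror_glue[OF H1_deriv_halfline_primitive_on a that] W
    by (simp add: in_W_halfline_def)
  moreover have "set_borel_measurable lborel {0<..} \<psi>"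
    unfolding set_borel_measurable_def \<psi>_def by measurable
  ultimately show "in_W_halfline \<phi> \<psi>"
    using glue_v(1) glue_g(1) glue_log(1)
    unfolding in_W_halfline_def H1_deriv_halfline_primitive_on_iff norm_\<phi> norm_\<psi> log_\<phi> by blast
qed

lemma frequently_less_at_top_of_integrable:
  fixes f :: "real \<Rightarrow> real"
  assumes int: "set_integrable lborel {0<..} f" and nonneg: "\<And>x. 0 \<le> f x" and "0 < \<delta>"
  shows "\<exists>\<^sub>F x in at_top. f x < \<delta>"
proof (rule ccontr)
  assume "\<not> (\<exists>\<^sub>F x in at_top. f x < \<delta>)"
  then obtain A where A: "\<And>x. A \<le> x \<Longrightarrow> \<delta> \<le> f x"
    by (auto simp: not_frequently eventually_at_top_linorder not_less)
  define N where "N = (LINT x:{0<..}|lborel. f x)"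
  define A' where "A' = max A 1"
  define K where "K = N / \<delta> + 1"
  have "0 \<le> N" unfolding N_def by (rule set_integral_nonneg) (use nonneg in auto)
  then have "0 < K" using \<open>0 < \<delta>\<close> by (simp add: K_def add_nonneg_pos)
  have "K * \<delta> = (LINT x:{A'..A' + K}|lborel. \<delta>)"
    using \<open>0 < K\<close> by (subst set_integral_const_bounded(2)[where u=A' and w="A' + K"]) auto
  also have "\<dots> \<le> (LINT x:{A'..A' + K}|lborel. f x)"
    using A set_integral_const_bounded(1)[of "{A'..A' + K}" A' "A' + K" \<delta>]
    by (intro set_integral_mono set_integrable_subset[OF int]) (auto simp: A'_def)
  also have "\<dots> \<le> N"
    unfolding N_def using nonneg by (intro set_integral_mono_set_nonneg[OF int]) (auto simp: A'_def)
  finally have "K * \<delta> \<le> N" .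
  moreover have "K * \<delta> = N + \<delta>" using \<open>0 < \<delta>\<close> by (simp add: K_def field_simps)
  ultimately show False using \<open>0 < \<delta>\<close> by simp
qed

lemma mult_ln_small_near_0:
  fixes c \<epsilon> :: real
  assumes "0 < \<epsilon>"
  shows "\<exists>\<delta>>0. \<forall>t. 0 \<le> t \<longrightarrow> t < \<delta> \<longrightarrow> t * (c + \<bar>ln t\<bar>) < \<epsilon>"
proof -
  have "((\<lambda>t. t * (c - ln t)) \<longlongrightarrow> 0) (at_right 0)" by real_asymp
  then have "eventually (\<lambda>t. t * (c - ln t) < \<epsilon>) (at_right (0::real))"
    using assms by (simp add: order_tendstoD(2))
  moreover have "eventually (\<lambda>t. t < (1::real)) (at_right 0)"
    unfolding eventually_at_right_field by (intro exI[of _ 1]) auto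
  ultimately have "eventually (\<lambda>t. t * (c + \<bar>ln t\<bar>) < \<epsilon>) (at_right (0::real))"
    using eventually_at_right_less[of 0] by eventually_elim simp
  then obtain \<delta> where "0 < \<delta>" "\<And>t. 0 < t \<Longrightarrow> t < \<delta> \<Longrightarrow> t * (c + \<bar>ln t\<bar>) < \<epsilon>"
    unfolding eventually_at_right_field by auto
  then show ?thesis using assms by (metis mult_zero_left order_le_less)
qed

lemma exists_far_point_small:
  fixes \<omega> :: real
  assumes W: "in_W_halfline v g" and "0 < \<epsilon>" "0 < \<delta>"
  shows "\<exists>a\<ge>0. (cmod (v a))\<^sup>2 < \<delta> \<and> \<bar>L2sq_upto a v - L2sq_halfline v\<bar> < \<epsilon>
           \<and> \<bar>I_upto a v g \<omega> - I_halfline v g \<omega>\<bar> < \<epsilon>"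
proof -
  have "\<exists>\<^sub>F a in at_top. (cmod (v a))\<^sup>2 < \<delta>"
    by (rule frequently_less_at_top_of_integrable[OF in_W_halfline_integrable(1)[OF W] _ \<open>0 < \<delta>\<close>]) simp
  moreover have "\<forall>\<^sub>F a in at_top. 0 \<le> a \<and> \<bar>L2sq_upto a v - L2sq_halfline v\<bar> < \<epsilon>
      \<and> \<bar>I_upto a v g \<omega> - I_halfline v g \<omega>\<bar> < \<epsilon>"
    using eventually_ge_at_top[of 0] tendstoD[OF tendsto_I_upto(1)[OF W] \<open>0 < \<epsilon>\<close>]
      tendstoD[OF tendsto_I_upto(2)[OF W] \<open>0 < \<epsilon>\<close>]
    by eventually_elim (simp add: dist_real_def)
  ultimately show ?thesis
    by (metis (mono_tags, lifting) frequently_eventually_conj frequently_ex)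
qed

lemma in_W_halfline_doubling:
  fixes \<omega> \<epsilon> :: real
  assumes W: "in_W_halfline v g" and "0 < \<epsilon>"
  shows "\<exists>\<phi> \<psi>. in_W_halfline \<phi> \<psi> \<and> \<phi> 0 = 0 \<and> \<bar>L2sq_halfline \<phi> - 2 * L2sq_halfline v\<bar> < \<epsilon>
            \<and> \<bar>I_halfline \<phi> \<psi> \<omega> - 2 * I_halfline v g \<omega>\<bar> < \<epsilon>"
proof -
  have "0 < \<epsilon> / 2" using \<open>0 < \<epsilon>\<close> by simp
  then obtain \<delta> where "0 < \<delta>" and \<delta>: "\<And>t. 0 \<le> t \<Longrightarrow> t < \<delta> \<Longrightarrow> t * (2 + \<bar>\<omega>\<bar> + \<bar>ln t\<bar>) < \<epsilon> / 2"
    using mult_ln_small_near_0 by blast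
  then obtain a where "0 \<le> a" and t: "(cmod (v a))\<^sup>2 < \<delta>"
    and upto: "\<bar>L2sq_upto a v - L2sq_halfline v\<bar> < \<epsilon> / 2" "\<bar>I_upto a v g \<omega> - I_halfline v g \<omega>\<bar> < \<epsilon> / 2"
    using exists_far_point_small[OF W \<open>0 < \<epsilon> / 2\<close> \<open>0 < \<delta>\<close>] by blast
  define t where "t = (cmod (v a))\<^sup>2"
  define R1 where "R1 = (LINT y:{0<..<1}|lborel. y\<^sup>2 * t)"
  define R3 where "R3 = (LINT y:{0<..<1}|lborel. (y\<^sup>2 * t) * ln (y\<^sup>2 * t))"
  define \<phi> where "\<phi> = mirror_glue a (\<lambda>y. y *\<^sub>R v a) v"
  note glued = mirror_glue_in_W_halfline[OF W \<open>0 \<le> a\<close>, folded t_def, folded R1_def R3_def \<phi>_def]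
  obtain \<psi> where \<psi>: "in_W_halfline \<phi> \<psi>" "L2sq_halfline \<psi> = t + L2sq_upto a g + L2sq_halfline g"
    using glued(1,4) by blast
  have "0 \<le> t" by (simp add: t_def)
  have small: "t * (2 + \<bar>\<omega>\<bar> + \<bar>ln t\<bar>) < \<epsilon> / 2" using \<delta> \<open>0 \<le> t\<close> t by (simp add: t_def)
  have R1: "\<bar>R1\<bar> \<le> t" and R3: "\<bar>R3\<bar> \<le> t * (1 + \<bar>ln t\<bar>)"
    unfolding R1_def R3_def using ramp_integrals[OF \<open>0 \<le> t\<close>] by simp_all
  have "\<bar>\<omega> * R1\<bar> \<le> \<bar>\<omega>\<bar> * t" using R1 by (simp add: abs_mult mult_left_mono)
  then have ramp: "\<bar>t + \<omega> * R1 - R3\<bar> \<le> t * (2 + \<bar>\<omega>\<bar> + \<bar>ln t\<bar>)"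
    using R3 \<open>0 \<le> t\<close> by (simp add: algebra_simps abs_le_iff)
  have "t \<le> t * (2 + \<bar>\<omega>\<bar> + \<bar>ln t\<bar>)" using \<open>0 \<le> t\<close> by (simp add: mult_le_cancel_left1)
  then have "\<bar>L2sq_halfline \<phi> - 2 * L2sq_halfline v\<bar> < \<epsilon>"
    using glued(3) R1 upto(1) small by linarith
  moreover have "I_halfline \<phi> \<psi> \<omega> - 2 * I_halfline v g \<omega>
      = (t + \<omega> * R1 - R3) + (I_upto a v g \<omega> - I_halfline v g \<omega>)"
    unfolding I_halfline_def glued(3,5) \<psi>(2) I_upto_def by (simp add: algebra_simps)
  then have "\<bar>I_halfline \<phi> \<psi> \<omega> - 2 * I_halfline v g \<omega>\<bar> < \<epsilon>"
    using ramp upto(2) small by linarith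
  ultimately show ?thesis using \<psi>(1) glued(2) by blast
qed

lemma norm_mult_sq_ln:
  fixes c z :: complex
  assumes "c \<noteq> 0"
  shows "(cmod (c * z))\<^sup>2 * ln ((cmod (c * z))\<^sup>2)
      = (cmod c)\<^sup>2 * ((cmod z)\<^sup>2 * ln ((cmod z)\<^sup>2)) + (cmod c)\<^sup>2 * ln ((cmod c)\<^sup>2) * (cmod z)\<^sup>2"
  using assms by (cases "z = 0") (simp_all add: norm_mult power_mult_distrib ln_mult algebra_simps)

lemma in_W_halfline_mult:
  fixes c :: complex
  assumes W: "in_W_halfline v g" and "c \<noteq> 0"
  shows "in_W_halfline (\<lambda>x. c * v x) (\<lambda>x. c * g x)"
proof -
  note int = in_W_halfline_integrable[OF W]
  have H: "H1_deriv_halfline v g" using W by (simp add: in_W_halfline_def)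
  have "(\<lambda>x. indicator {0<..} x *\<^sub>R g x) \<in> borel_measurable lborel"
    using H unfolding H1_deriv_halfline_def set_borel_measurable_def by blast
  then have "(\<lambda>x. c * (indicator {0<..} x *\<^sub>R g x)) \<in> borel_measurable lborel" by measurable
  then have "set_borel_measurable lborel {0<..} (\<lambda>x. c * g x)"
    unfolding set_borel_measurable_def by (simp add: mult_scaleR_right)
  moreover have "set_integrable lborel {0..x} (\<lambda>t. c * g t)
      \<and> c * v x = c * v 0 + (LINT t:{0..x}|lborel. c * g t)" if "0 \<le> x" for x
  proof -
    have "set_integrable lborel {0..x} g" "v x = v 0 + (LINT t:{0..x}|lborel. g t)"
      using H that unfolding H1_deriv_halfline_def by blast+
    then show ?thesis by (simp add: algebra_simps)
  qed
  moreover have "set_integrable lborel {0<..} (\<lambda>x. (cmod (c * v x))\<^sup>2)"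
    and "set_integrable lborel {0<..} (\<lambda>x. (cmod (c * g x))\<^sup>2)"
    using int by (simp_all add: norm_mult power_mult_distrib)
  moreover have "set_integrable lborel {0<..} (\<lambda>x. (cmod (c * v x))\<^sup>2 * ln ((cmod (c * v x))\<^sup>2))"
    unfolding norm_mult_sq_ln[OF \<open>c \<noteq> 0\<close>] using int by (intro set_integral_add) auto
  ultimately show ?thesis
    unfolding in_W_halfline_def H1_deriv_halfline_def by blast
qed

lemma I_halfline_mult:
  fixes c :: complex
  assumes "in_W_halfline v g" and "c \<noteq> 0"
  shows "I_halfline (\<lambda>x. c * v x) (\<lambda>x. c * g x) \<omega>
           = (cmod c)\<^sup>2 * (I_halfline v g \<omega> - ln ((cmod c)\<^sup>2) * L2sq_halfline v)"
proof -
  note int = in_W_halfline_integrable[OF assms(1)]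
  have "logterm_halfline (\<lambda>x. c * v x)
      = (cmod c)\<^sup>2 * logterm_halfline v + (cmod c)\<^sup>2 * ln ((cmod c)\<^sup>2) * L2sq_halfline v"
    using int unfolding logterm_halfline_def L2sq_halfline_def norm_mult_sq_ln[OF assms(2)]
    by (simp add: set_integral_add(2) set_integral_mult_right)
  then show ?thesis
    unfolding I_halfline_def L2sq_halfline_def by (simp add: norm_mult power_mult_distrib algebra_simps)
qed

definition tent :: "real \<Rightarrow> complex" where
  "tent x = (if x < 1 then complex_of_real (1 - x) else 0)"

definition tent_deriv :: "real \<Rightarrow> complex" where
  "tent_deriv x = (if x < 1 then - 1 else 0)"

lemma norm_tent_sq: "x < 1 \<Longrightarrow> (cmod (tent x))\<^sup>2 = (1 - x)\<^sup>2"
  by (simp add: tent_def del: of_real_diff)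

lemma primitive_on_tent:
  assumes "0 \<le> x"
  shows "primitive_on tent tent_deriv 0 x"
proof -
  have ramp: "primitive_on tent tent_deriv 0 y" if "0 \<le> y" "y \<le> 1" for y
    using primitive_on_linear[OF that(1), of "- 1"]
    by (rule primitive_on_cong) (use that in \<open>auto simp: tent_def tent_deriv_def scaleR_conv_of_real\<close>)
  show ?thesis
  proof (cases "x \<le> 1")
    case True
    then show ?thesis by (rule ramp[OF assms])
  next
    case False
    then have "1 \<le> x" by simp
    have "primitive_on tent tent_deriv 1 x"
      using primitive_on_linear[OF \<open>1 \<le> x\<close>, of 0]
      by (rule primitive_on_cong) (use False in \<open>auto simp: tent_def tent_deriv_def\<close>)
    then show ?thesis
      by (rule primitive_on_trans[OF zero_le_one \<open>1 \<le> x\<close> ramp[OF zero_le_one order_refl]])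
  qed
qed

lemma set_integrable_tent_sq: "set_integrable lborel {0<..} (\<lambda>x. (cmod (tent x))\<^sup>2)"
  by (rule set_integrable_Ioi_of_bounded_support[where B=1])
    (auto simp: norm_tent_sq abs_square_le_1 simp del: of_real_diff, auto simp: tent_def)

lemma in_W_halfline_tent: "in_W_halfline tent tent_deriv"
proof -
  have "set_integrable lborel {0<..} (\<lambda>x. (cmod (tent_deriv x))\<^sup>2)"
    by (rule set_integrable_Ioi_of_bounded_support[where B=1]) (auto simp: tent_deriv_def)
  moreover have "set_integrable lborel {0<..} (\<lambda>x. (cmod (tent x))\<^sup>2 * ln ((cmod (tent x))\<^sup>2))"
  proof (rule set_integrable_Ioi_of_bounded_support[where B=1])
    show "(\<lambda>x. (cmod (tent x))\<^sup>2 * ln ((cmod (tent x))\<^sup>2)) \<in> borel_measurable borel"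
      unfolding tent_def by measurable
    show "(cmod (tent x))\<^sup>2 * ln ((cmod (tent x))\<^sup>2) = 0" if "1 \<le> x" for x
      using that by (simp add: tent_def)
    show "\<bar>(cmod (tent x))\<^sup>2 * ln ((cmod (tent x))\<^sup>2)\<bar> \<le> 1" if "0 < x" "x < 1" for x
      using that abs_mult_ln_le_1[of "(1 - x)\<^sup>2"] by (simp add: norm_tent_sq abs_square_le_1)
  qed
  moreover have "set_borel_measurable lborel {0<..} tent_deriv"
    unfolding set_borel_measurable_def tent_deriv_def by measurable
  ultimately show ?thesis
    using set_integrable_tent_sq primitive_on_tent
    unfolding in_W_halfline_def H1_deriv_halfline_primitive_on_iff by blast
qed

lemma L2sq_halfline_tent_pos: "0 < L2sq_halfline tent"
proof -
  have const: "set_integrable lborel {0<..1/2::real} (\<lambda>_. 1/4 :: real)"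
    by (rule set_integral_const_bounded(1)[where u=0 and w=1]) auto
  have "1/8 = (LINT x:{0<..1/2::real}|lborel. 1/4 :: real)"
    by (subst set_integral_const_bounded(2)[where u=0 and w=1]) auto
  also have "\<dots> \<le> (LINT x:{0<..1/2}|lborel. (cmod (tent x))\<^sup>2)"
  proof (rule set_integral_mono[OF const set_integrable_subset[OF set_integrable_tent_sq]])
    fix x :: real assume "x \<in> {0<..1/2}"
    then show "1/4 \<le> (cmod (tent x))\<^sup>2"
      using norm_tent_sq[of x] power_mono[of "1/2" "1 - x" 2] by (simp add: power_divide)
  qed auto
  also have "\<dots> \<le> L2sq_halfline tent"
    unfolding L2sq_halfline_def by (rule set_integral_mono_set_nonneg[OF set_integrable_tent_sq]) auto
  finally show ?thesis by simp
qed

lemma nehari_set_nonempty: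
  "\<exists>v g. in_W_halfline v g \<and> (\<exists>x\<ge>0. v x \<noteq> 0) \<and> I_halfline v g \<omega> = 0"
proof -
  define k where "k = I_halfline tent tent_deriv \<omega> / L2sq_halfline tent"
  define c where "c = complex_of_real (exp (k / 2))"
  have "c \<noteq> 0" by (simp add: c_def)
  have "(cmod c)\<^sup>2 = exp k" by (simp add: c_def power2_eq_square exp_add[symmetric])
  then have "I_halfline (\<lambda>x. c * tent x) (\<lambda>x. c * tent_deriv x) \<omega> = 0"
    using I_halfline_mult[OF in_W_halfline_tent \<open>c \<noteq> 0\<close>] L2sq_halfline_tent_pos
    by (simp add: k_def)
  moreover have "c * tent 0 \<noteq> 0" using \<open>c \<noteq> 0\<close> by (simp add: tent_def)
  ultimately show ?thesis using in_W_halfline_mult[OF in_W_halfline_tent \<open>c \<noteq> 0\<close>] by blast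
qed

lemma S_halfline_eq: "S_halfline v g \<omega> = I_halfline v g \<omega> / 2 + L2sq_halfline v / 2"
  unfolding S_halfline_def I_halfline_def by (simp add: field_simps)

lemma L2sq_halfline_nonneg: "0 \<le> L2sq_halfline v"
  unfolding L2sq_halfline_def by (rule set_integral_nonneg) simp

lemma d_halfline_approx:
  assumes "0 < \<epsilon>"
  shows "\<exists>v g. in_W_halfline v g \<and> I_halfline v g \<omega> = 0 \<and> \<bar>L2sq_halfline v - 2 * d_halfline \<omega>\<bar> < \<epsilon>"
proof -
  define X where "X = {S_halfline v g \<omega> | v g. in_W_halfline v g \<and> (\<exists>x\<ge>0. v x \<noteq> 0) \<and> I_halfline v g \<omega> = 0}"
  have d: "d_halfline \<omega> = Inf X" unfolding d_halfline_def X_def ..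
  have "X \<noteq> {}" using nehari_set_nonempty[of \<omega>] unfolding X_def by blast
  have "bdd_below X"
    unfolding bdd_below_def X_def using S_halfline_eq L2sq_halfline_nonneg by (intro exI[of _ 0]) force
  obtain s where "s \<in> X" "s < Inf X + \<epsilon> / 2"
    using cInf_lessD[OF \<open>X \<noteq> {}\<close>, of "Inf X + \<epsilon> / 2"] assms by auto
  moreover have "Inf X \<le> s" by (rule cInf_lower[OF \<open>s \<in> X\<close> \<open>bdd_below X\<close>])
  moreover obtain v g where "s = S_halfline v g \<omega>" "in_W_halfline v g" "I_halfline v g \<omega> = 0"
    using \<open>s \<in> X\<close> unfolding X_def by blast
  ultimately show ?thesis unfolding d by (intro exI[of _ v] exI[of _ g]) (auto simp: S_halfline_eq)
qed

lemma approximating_sequence: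
  fixes f h :: "'a \<Rightarrow> real"
  assumes "\<And>\<epsilon>. 0 < \<epsilon> \<Longrightarrow> \<exists>x. P x \<and> \<bar>f x - a\<bar> < \<epsilon> \<and> \<bar>h x - b\<bar> < \<epsilon>"
  shows "\<exists>X. (\<forall>n. P (X n)) \<and> (\<lambda>n. f (X n)) \<longlonglongrightarrow> a \<and> (\<lambda>n. h (X n)) \<longlonglongrightarrow> b"
proof -
  have "\<forall>n. \<exists>x. P x \<and> \<bar>f x - a\<bar> < inverse (Suc n) \<and> \<bar>h x - b\<bar> < inverse (Suc n)"
    using assms by simp
  then obtain X where X: "\<And>n. P (X n)"
    "\<And>n. \<bar>f (X n) - a\<bar> < inverse (Suc n)" "\<And>n. \<bar>h (X n) - b\<bar> < inverse (Suc n)"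
    by metis
  have "(\<lambda>n. f (X n) - a) \<longlonglongrightarrow> 0" "(\<lambda>n. h (X n) - b) \<longlonglongrightarrow> 0"
    using X(2,3) by (auto intro!: Lim_null_comparison[OF _ LIMSEQ_inverse_real_of_nat] always_eventually less_imp_le)
  then show ?thesis using X(1) by (blast intro: LIM_zero_cancel)
qed

lemma exists_vanishing_at_0_near_4d:
  assumes "0 < \<epsilon>"
  shows "\<exists>\<phi> \<psi>. in_W_halfline \<phi> \<psi> \<and> \<phi> 0 = 0 \<and> \<bar>L2sq_halfline \<phi> - 4 * d_halfline \<omega>\<bar> < \<epsilon>
           \<and> \<bar>I_halfline \<phi> \<psi> \<omega>\<bar> < \<epsilon>"
proof -
  obtain v g where "in_W_halfline v g" "I_halfline v g \<omega> = 0"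
    and level: "\<bar>L2sq_halfline v - 2 * d_halfline \<omega>\<bar> < \<epsilon> / 4"
    using d_halfline_approx[of "\<epsilon> / 4" \<omega>] \<open>0 < \<epsilon>\<close> by auto
  obtain \<phi> \<psi> where "in_W_halfline \<phi> \<psi>" "\<phi> 0 = 0"
    and doubled: "\<bar>L2sq_halfline \<phi> - 2 * L2sq_halfline v\<bar> < \<epsilon> / 2"
      "\<bar>I_halfline \<phi> \<psi> \<omega> - 2 * I_halfline v g \<omega>\<bar> < \<epsilon> / 2"
    using in_W_halfline_doubling[OF \<open>in_W_halfline v g\<close>, of "\<epsilon> / 2" \<omega>] \<open>0 < \<epsilon>\<close> by auto
  have "\<bar>L2sq_halfline \<phi> - 4 * d_halfline \<omega>\<bar> < \<epsilon>"
    using level doubled(1) unfolding abs_less_iff by linarith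
  moreover have "\<bar>I_halfline \<phi> \<psi> \<omega>\<bar> < \<epsilon>"
    using doubled(2) \<open>I_halfline v g \<omega> = 0\<close> by simp
  ultimately show ?thesis using \<open>in_W_halfline \<phi> \<psi>\<close> \<open>\<phi> 0 = 0\<close> by blast
qed

theorem lemma5p2:
  fixes \<omega> :: real
  shows "\<exists>(\<phi> :: nat \<Rightarrow> real \<Rightarrow> complex) (g :: nat \<Rightarrow> real \<Rightarrow> complex).
           (\<forall>n. in_W_halfline (\<phi> n) (g n) \<and> \<phi> n 0 = 0) \<and>
           (\<lambda>n. L2sq_halfline (\<phi> n)) \<longlonglongrightarrow> 4 * d_halfline \<omega> \<and>
           (\<lambda>n. I_halfline (\<phi> n) (g n) \<omega>) \<longlonglongrightarrow> 0"
proof -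
  have "\<exists>p. (in_W_halfline (fst p) (snd p) \<and> fst p 0 = 0)
      \<and> \<bar>L2sq_halfline (fst p) - 4 * d_halfline \<omega>\<bar> < \<epsilon> \<and> \<bar>I_halfline (fst p) (snd p) \<omega> - 0\<bar> < \<epsilon>"
    if "0 < \<epsilon>" for \<epsilon>
    using exists_vanishing_at_0_near_4d[OF that, of \<omega>] by auto
  from approximating_sequence[OF this] obtain X where
    "\<forall>n. in_W_halfline (fst (X n)) (snd (X n)) \<and> fst (X n) 0 = 0"
    "(\<lambda>n. L2sq_halfline (fst (X n))) \<longlonglongrightarrow> 4 * d_halfline \<omega>"
    "(\<lambda>n. I_halfline (fst (X n)) (snd (X n)) \<omega>) \<longlonglongrightarrow> 0"
    by blast
  then show ?thesis by (intro exI[of _ "\<lambda>n. fst (X n)"] exI[of _ "\<lambda>n. snd (X n)"]) simp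
qed

end
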